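(* Let $\Omega$ be an infinite set, $G$ a subgroup of $S=\mathrm{Sym}(\Omega)$, and $\Gamma\subseteq\Omega$ a subset such that $|\Omega|^{|\Gamma|}\le|\Omega|$ (e.g., $\Gamma$ finite). Then $G_{(\Gamma)}\approx_{|\Omega|^+}G$.
   Context: $\mathrm{Sym}(\Omega)$ is the group of all permutations of $\Omega$. $G_{(\Gamma)}=\{g\in G:\gamma g=\gamma\ \forall\gamma\in\Gamma\}$. $|\Omega|^+$ is the successor cardinal of $|\Omega|$. For an infinite cardinal $\kappa$ and subgroups $G_1,G_2\le S$, $G_1\preccurlyeq_\kappa G_2$ means there exists $U\subseteq S$ with $|U|<\kappa$ and $G_1\le\langle G_2\cup U\rangle$; $G_1\approx_\kappa G_2$ means $G_1\preccurlyeq_\kappa G_2$ and $G_2\preccurlyeq_\kappa G_1$. *)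

theory Defs
  imports "HOL-Algebra.Bij" "HOL-Algebra.Generated_Groups"
begin

text \<open>Sym(Omega) is modelled as the HOL-Algebra group BijGroup Omega
  (bijections of Omega, extensional outside Omega).\<close>

definition Sym :: "'a set \<Rightarrow> ('a \<Rightarrow> 'a) monoid" where
  "Sym \<Omega> = BijGroup \<Omega>"

definition ptwise_stab :: "('a \<Rightarrow> 'a) set \<Rightarrow> 'a set \<Rightarrow> ('a \<Rightarrow> 'a) set" where
  "ptwise_stab G \<Gamma> = {g \<in> G. \<forall>\<gamma>\<in>\<Gamma>. g \<gamma> = \<gamma>}"

definition preccurly :: "'b rel \<Rightarrow> 'a set \<Rightarrow> ('a \<Rightarrow> 'a) set \<Rightarrow> ('a \<Rightarrow> 'a) set \<Rightarrow> bool" where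
  "preccurly \<kappa> \<Omega> G1 G2 \<longleftrightarrow>
     (\<exists>U. U \<subseteq> carrier (Sym \<Omega>) \<and> (card_of U, \<kappa>) \<in> ordLess \<and>
          G1 \<subseteq> generate (Sym \<Omega>) (G2 \<union> U))"

definition approx_k :: "'b rel \<Rightarrow> 'a set \<Rightarrow> ('a \<Rightarrow> 'a) set \<Rightarrow> ('a \<Rightarrow> 'a) set \<Rightarrow> bool" where
  "approx_k \<kappa> \<Omega> G1 G2 \<longleftrightarrow> preccurly \<kappa> \<Omega> G1 G2 \<and> preccurly \<kappa> \<Omega> G2 G1"

end

theory Submission
  imports Defs
begin

text \<open>Two elements of \<open>G\<close> that agree on \<open>\<Gamma>\<close> lie in the same left coset of \<open>G\<^sub>(\<^sub>\<Gamma>\<^sub>)\<close>,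
  so \<open>G\<close> is generated by \<open>G\<^sub>(\<^sub>\<Gamma>\<^sub>)\<close> together with one representative for each
  restriction \<open>g|\<^sub>\<Gamma>\<close>, \<open>g \<in> G\<close>. These restrictions lie in \<open>\<Omega>\<^sup>\<Gamma>\<close>, so there are at most
  \<open>|\<Omega>|\<^bsup>|\<Gamma>|\<^esup> \<le> |\<Omega>| < |\<Omega>|\<^sup>+\<close> of them. The other direction is trivial, as
  \<open>G\<^sub>(\<^sub>\<Gamma>\<^sub>) \<subseteq> G\<close>.\<close>

unbundle cardinal_syntax

lemma group_Sym: "group (Sym \<Omega>)"
  unfolding Sym_def by (rule group_BijGroup)

lemma carrier_Sym: "carrier (Sym \<Omega>) = Bij \<Omega>"
  by (simp add: Sym_def BijGroup_def)

lemma Sym_mult_apply: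
  assumes "g \<in> Bij \<Omega>" "h \<in> Bij \<Omega>" "x \<in> \<Omega>"
  shows "(g \<otimes>\<^bsub>Sym \<Omega>\<^esub> h) x = g (h x)"
  using assms by (simp add: Sym_def BijGroup_def compose_def)

lemma Sym_inv_apply_apply:
  assumes "g \<in> Bij \<Omega>" "x \<in> \<Omega>"
  shows "(inv\<^bsub>Sym \<Omega>\<^esub> g) (g x) = x"
proof -
  have "bij_betw g \<Omega> \<Omega>" using assms(1) by (simp add: Bij_def)
  then show ?thesis
    using assms by (simp add: Sym_def inv_BijGroup bij_betw_apply bij_betw_imp_inj_on)
qed

lemma (in group) subset_generate_Un_if_left_cosets_cover:
  assumes "A \<subseteq> carrier G" "U \<subseteq> carrier G"
    and "\<And>g. g \<in> A \<Longrightarrow> \<exists>h\<in>U. inv h \<otimes> g \<in> K"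
  shows "A \<subseteq> generate G (K \<union> U)"
proof
  fix g assume "g \<in> A"
  then obtain h where "h \<in> U" "inv h \<otimes> g \<in> K" using assms(3) by blast
  then have "h \<otimes> (inv h \<otimes> g) \<in> generate G (K \<union> U)"
    by (blast intro: generate.eng generate.incl)
  also have "h \<otimes> (inv h \<otimes> g) = g"
    using \<open>g \<in> A\<close> \<open>h \<in> U\<close> assms(1,2) by (simp add: subsetD m_assoc[symmetric])
  finally show "g \<in> generate G (K \<union> U)" .
qed

lemma inv_mult_in_ptwise_stab:
  assumes G: "subgroup G (Sym \<Omega>)" and "\<Gamma> \<subseteq> \<Omega>" and "g \<in> G" "h \<in> G"
    and agree: "\<And>\<gamma>. \<gamma> \<in> \<Gamma> \<Longrightarrow> h \<gamma> = g \<gamma>"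
  shows "inv\<^bsub>Sym \<Omega>\<^esub> h \<otimes>\<^bsub>Sym \<Omega>\<^esub> g \<in> ptwise_stab G \<Gamma>"
proof -
  have "g \<in> Bij \<Omega>" "h \<in> Bij \<Omega>"
    using G \<open>g \<in> G\<close> \<open>h \<in> G\<close> subgroup.subset carrier_Sym by blast+
  then have "(inv\<^bsub>Sym \<Omega>\<^esub> h \<otimes>\<^bsub>Sym \<Omega>\<^esub> g) \<gamma> = \<gamma>" if "\<gamma> \<in> \<Gamma>" for \<gamma>
    using that \<open>\<Gamma> \<subseteq> \<Omega>\<close> agree[symmetric]
    by (auto simp: Sym_mult_apply Sym_inv_apply_apply
          group.inv_closed[OF group_Sym] carrier_Sym[symmetric])
  moreover have "inv\<^bsub>Sym \<Omega>\<^esub> h \<otimes>\<^bsub>Sym \<Omega>\<^esub> g \<in> G"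
    using G \<open>g \<in> G\<close> \<open>h \<in> G\<close> by (simp add: subgroup.m_closed subgroup.m_inv_closed)
  ultimately show ?thesis by (simp add: ptwise_stab_def)
qed

lemma subset_generate_ptwise_stab_Un:
  assumes G: "subgroup G (Sym \<Omega>)" and "\<Gamma> \<subseteq> \<Omega>" and "U \<subseteq> G"
    and reps: "\<And>g. g \<in> G \<Longrightarrow> \<exists>h\<in>U. restrict h \<Gamma> = restrict g \<Gamma>"
  shows "G \<subseteq> generate (Sym \<Omega>) (ptwise_stab G \<Gamma> \<union> U)"
proof (rule group.subset_generate_Un_if_left_cosets_cover[OF group_Sym])
  show "G \<subseteq> carrier (Sym \<Omega>)" "U \<subseteq> carrier (Sym \<Omega>)"
    using G \<open>U \<subseteq> G\<close> subgroup.subset by blast+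
  fix g assume "g \<in> G"
  then obtain h where "h \<in> U" "restrict h \<Gamma> = restrict g \<Gamma>" using reps by blast
  then have "h \<gamma> = g \<gamma>" if "\<gamma> \<in> \<Gamma>" for \<gamma>
    using that by (metis restrict_apply')
  then show "\<exists>h\<in>U. inv\<^bsub>Sym \<Omega>\<^esub> h \<otimes>\<^bsub>Sym \<Omega>\<^esub> g \<in> ptwise_stab G \<Gamma>"
    using \<open>h \<in> U\<close> \<open>g \<in> G\<close> \<open>U \<subseteq> G\<close> inv_mult_in_ptwise_stab[OF G \<open>\<Gamma> \<subseteq> \<Omega>\<close>] by blast
qed

lemma exists_fibre_representatives:
  "\<exists>U \<subseteq> A. |U| \<le>o |f ` A| \<and> (\<forall>x\<in>A. \<exists>y\<in>U. f y = f x)"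
proof (intro exI conjI ballI)
  show "inv_into A f ` f ` A \<subseteq> A" by (auto intro: inv_into_into)
  show "|inv_into A f ` f ` A| \<le>o |f ` A|" by (rule card_of_image)
  fix x assume "x \<in> A"
  then show "\<exists>y\<in>inv_into A f ` f ` A. f y = f x" by (auto intro: f_inv_into_f)
qed

lemma restrict_image_subset_Func:
  assumes "F \<subseteq> A \<rightarrow> B"
  shows "(\<lambda>f. restrict f A) ` F \<subseteq> Func A B"
proof (rule image_subsetI)
  fix f assume "f \<in> F"
  then have "f \<in> A \<rightarrow> B" using assms by blast
  then show "restrict f A \<in> Func A B" by (simp add: Func_def Pi_iff)
qed

lemma preccurly_cardSuc_card_ofI:
  assumes "U \<subseteq> carrier (Sym \<Omega>)" "|U| \<le>o |\<Omega>|"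
    and "G1 \<subseteq> generate (Sym \<Omega>) (G2 \<union> U)"
  shows "preccurly (cardSuc |\<Omega>| ) \<Omega> G1 G2"
  unfolding preccurly_def
  using assms cardSuc_ordLeq_ordLess[OF card_of_Card_order card_of_Card_order] by blast

theorem lemma2p2:
  fixes \<Omega> :: "'a set" and G :: "('a \<Rightarrow> 'a) set" and \<Gamma> :: "'a set"
  assumes "infinite \<Omega>"
    and "subgroup G (Sym \<Omega>)"
    and "\<Gamma> \<subseteq> \<Omega>"
    and "(BNF_Cardinal_Arithmetic.cexp (card_of \<Omega>) (card_of \<Gamma>), card_of \<Omega>) \<in> ordLeq"
  shows "approx_k (cardSuc (card_of \<Omega>)) \<Omega> (ptwise_stab G \<Gamma>) G"
proof -
  have "ptwise_stab G \<Gamma> \<subseteq> generate (Sym \<Omega>) (G \<union> {})"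
    unfolding ptwise_stab_def using generate.incl by fastforce
  then have stab_le: "preccurly (cardSuc |\<Omega>| ) \<Omega> (ptwise_stab G \<Gamma>) G"
    using preccurly_cardSuc_card_ofI[of "{}"] card_of_empty by blast
  obtain U where "U \<subseteq> G" and U_card: "|U| \<le>o |(\<lambda>g. restrict g \<Gamma>) ` G|"
    and reps: "\<forall>g\<in>G. \<exists>h\<in>U. restrict h \<Gamma> = restrict g \<Gamma>"
    using exists_fibre_representatives[of G "\<lambda>g. restrict g \<Gamma>"] by blast
  have "G \<subseteq> Bij \<Omega>" using assms(2) subgroup.subset carrier_Sym by blast
  then have "G \<subseteq> \<Gamma> \<rightarrow> \<Omega>" using assms(3) by (fastforce dest: Bij_imp_funcset)
  note [trans] = ordLeq_transitive
  note U_card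
  also have "|(\<lambda>g. restrict g \<Gamma>) ` G| \<le>o |Func \<Gamma> \<Omega>|"
    using \<open>G \<subseteq> \<Gamma> \<rightarrow> \<Omega>\<close> by (intro card_of_mono1 restrict_image_subset_Func)
  also have "|Func \<Gamma> \<Omega>| \<le>o |\<Omega>|"
    using assms(4) by (simp add: cexp_def Field_card_of)
  finally have "|U| \<le>o |\<Omega>|" .
  moreover have "G \<subseteq> generate (Sym \<Omega>) (ptwise_stab G \<Gamma> \<union> U)"
    using subset_generate_ptwise_stab_Un assms(2,3) \<open>U \<subseteq> G\<close> reps by blast
  ultimately have le_stab: "preccurly (cardSuc |\<Omega>| ) \<Omega> G (ptwise_stab G \<Gamma>)"
    using \<open>U \<subseteq> G\<close> \<open>G \<subseteq> Bij \<Omega>\<close> preccurly_cardSuc_card_ofI[of U \<Omega>]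
    by (simp add: carrier_Sym)
  show ?thesis
    unfolding approx_k_def using stab_le le_stab by blast
qed

end
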